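(* Let $\mathcal{G}=\langle S,A,T,s_0,F\rangle$ be a two-player turn-based deterministic reachability game. For any disjoint $X,Y\subseteq\mathrm{Win}_2(\mathcal{G},F)\setminus F$, we have $\mathrm{DASWin}_1(X,Y)\subseteq\mathrm{DSWin}_1(X,Y)$.
   Context: A two-player turn-based deterministic reachability game is a tuple $\mathcal{G}=\langle S,A,T,s_0,F\rangle$: $S$ finite, partitioned into P1 states $S_1$ and P2 states $S_2$; $A=A_1\cup A_2$ (P1 and P2 actions); $T:(S_1\times A_1)\cup(S_2\times A_2)\to S$ deterministic, possibly partial ($a$ enabled at $s$ iff $T(s,a)$ defined; every state has an enabled action); $s_0$ initial; $F\subseteq S$ a set of sink states (P2's goal). For a target $R$: $Z_0=R$, $Z_{k+1}=Z_k\cup\{s\in S_1:T(s,a)\in Z_k\ \forall\text{ enabled }a\}\cup\{s\in S_2:T(s,a)\in Z_k\text{ for some enabled }a\}$, $\mathrm{Win}_2(\mathcal{G},R)=\bigcup_kZ_k$, $\mathrm{rank}_{\mathcal{G},R}(s)=\min\{k:s\in Z_k\}$ ($\infty$ if none). For disjoint $X,Y\subseteq\mathrm{Win}_2(\mathcal{G},F)\setminus F$ (traps $X$, fake targets $Y$): the true game $\mathcal{G}^1_{X,Y}$ has states $S$ and transitions $T_{X,Y}(q,a)=T(q,a)$ if $q\notin X\cup Y$, $T_{X,Y}(q,a)=q$ if $q\in X\cup Y$; P2's perceptual game $\mathcal{G}^2_{X,Y}$ has transitions $T$ and goal $F\cup Y$, with $\mathrm{rank}_{\mathcal{G}^2_{X,Y}}:=\mathrm{rank}_{\mathcal{G},F\cup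 Y}$. A memoryless randomized strategy of player $i$ maps each $q\in S_i$ to a distribution over enabled actions (deterministic if all are point masses); a pair of strategies and a start state determine the set of generated paths and a probability measure on paths of $\mathcal{G}^1_{X,Y}$. Sure-winning notion: for $q\in S_2\cap\mathrm{Win}_2(\mathcal{G},F)\setminus(F\cup Y)$, $\mathsf{SRActs}_{X,Y}(q)=\{a\text{ enabled}:\mathrm{rank}_{\mathcal{G}^2_{X,Y}}(T(q,a))<\mathrm{rank}_{\mathcal{G}^2_{X,Y}}(q)\}$, and all enabled actions at every other state; a memoryless deterministic strategy is subjectively rationalizable if it always picks an action in $\mathsf{SRActs}_{X,Y}$; a memoryless deterministic P1 strategy $\pi_1$ is stealthy deceptive sure winning at $s$ if it is subjectively rationalizable and for every subjectively rationalizable memoryless deterministic P2 strategy $\pi_2$ every path from $s$ generated by $(\pi_1,\pi_2)$ in $\mathcal{G}^1_{X,Y}$ visits $X\cup Y$ within finitely many steps; $\mathrm{DSWin}_1(X,Y)$ is the set of states where such a strategy exists. Almost-sure notion: for $q\in S_2\cap\mathrm{Win}_2(\mathcal{G},F)\setminus F$, $\widehat{\mathsf{SRActs}}(q)=\{a\text{ enabled}:T(q,a)\in\mathrm{Win}_2(\mathcal{G},F)\}$, and all enabled actions at every other state; a memoryless randomized strategy is subjectively rationalizable if at each of its player's states $q$ its support is a nonempty subset of $\widehat{\mathsf{SRActs}}(q)$; a memoryless randomized P1 strategy $\pi_1$ is stealthy deceptive almost-sure winning at $s$ if it is subjectively rationalizable and for every subjectively rationalizable memoryless randomized P2 strategy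 $\pi_2$ the path of $\mathcal{G}^1_{X,Y}$ from $s$ under $(\pi_1,\pi_2)$ visits $X\cup Y$ with probability one; $\mathrm{DASWin}_1(X,Y)$ is the set of states where such a strategy exists. *)

theory Defs
  imports "HOL-Probability.Probability" "HOL-Library.Extended_Nat"
begin

text \<open>A game: states St partitioned into S1 (player 1) and S2 (player 2),
  actions Act1, Act2, partial deterministic transition function Tr
  (an action a is enabled at s iff Tr s a is not None), initial state,
  and the set Fin of P2-goal sink states.\<close>

record ('s, 'a) game =
  St   :: "'s set"
  S1   :: "'s set"
  S2   :: "'s set"
  Act1 :: "'a set"
  Act2 :: "'a set"
  Tr   :: "'s \<Rightarrow> 'a \<Rightarrow> 's option"
  init :: "'s"
  Fin  :: "'s set"

definition enabled :: "('s, 'a) game \<Rightarrow> 's \<Rightarrow> 'a \<Rightarrow> bool" where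
  "enabled G s a \<longleftrightarrow> Tr G s a \<noteq> None"

definition nxt :: "('s, 'a) game \<Rightarrow> 's \<Rightarrow> 'a \<Rightarrow> 's" where
  "nxt G s a = the (Tr G s a)"

definition reach_game :: "('s, 'a) game \<Rightarrow> bool" where
  "reach_game G \<longleftrightarrow>
     finite (St G) \<and>
     S1 G \<union> S2 G = St G \<and> S1 G \<inter> S2 G = {} \<and>
     (\<forall>s a. Tr G s a \<noteq> None \<longrightarrow>
        (s \<in> S1 G \<and> a \<in> Act1 G) \<or> (s \<in> S2 G \<and> a \<in> Act2 G)) \<and>
     (\<forall>s a s'. Tr G s a = Some s' \<longrightarrow> s' \<in> St G) \<and>
     (\<forall>s \<in> St G. \<exists>a. Tr G s a \<noteq> None) \<and>
     init G \<in> St G \<and>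
     Fin G \<subseteq> St G \<and>
     (\<forall>f \<in> Fin G. \<forall>a s'. Tr G f a = Some s' \<longrightarrow> s' = f)"

fun attr :: "('s, 'a) game \<Rightarrow> 's set \<Rightarrow> nat \<Rightarrow> 's set" where
  "attr G R 0 = R"
| "attr G R (Suc k) = attr G R k
     \<union> {s \<in> S1 G. \<forall>a. enabled G s a \<longrightarrow> nxt G s a \<in> attr G R k}
     \<union> {s \<in> S2 G. \<exists>a. enabled G s a \<and> nxt G s a \<in> attr G R k}"

definition Win2 :: "('s, 'a) game \<Rightarrow> 's set \<Rightarrow> 's set" where
  "Win2 G R = (\<Union>k. attr G R k)"

definition rank :: "('s, 'a) game \<Rightarrow> 's set \<Rightarrow> 's \<Rightarrow> enat" where
  "rank G R s = (if \<exists>k. s \<in> attr G R k then enat (LEAST k. s \<in> attr G R k) else \<infinity>)"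

definition true_game :: "('s, 'a) game \<Rightarrow> 's set \<Rightarrow> 's set \<Rightarrow> ('s, 'a) game" where
  "true_game G X Y = G\<lparr>Tr := (\<lambda>q a. if q \<in> X \<union> Y then map_option (\<lambda>_. q) (Tr G q a)
                                       else Tr G q a)\<rparr>"

definition perc_game :: "('s, 'a) game \<Rightarrow> 's set \<Rightarrow> 's set \<Rightarrow> ('s, 'a) game" where
  "perc_game G X Y = G\<lparr>Fin := Fin G \<union> Y\<rparr>"

definition perc_rank :: "('s, 'a) game \<Rightarrow> 's set \<Rightarrow> 's set \<Rightarrow> 's \<Rightarrow> enat" where
  "perc_rank G X Y = rank (perc_game G X Y) (Fin (perc_game G X Y))"

definition SRActs :: "('s, 'a) game \<Rightarrow> 's set \<Rightarrow> 's set \<Rightarrow> 's \<Rightarrow> 'a set" where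
  "SRActs G X Y q =
     (if q \<in> S2 G \<inter> Win2 G (Fin G) - (Fin G \<union> Y)
      then {a. enabled G q a \<and> perc_rank G X Y (nxt G q a) < perc_rank G X Y q}
      else {a. enabled G q a})"

definition sr_det :: "('s, 'a) game \<Rightarrow> 's set \<Rightarrow> 's set \<Rightarrow> 's set \<Rightarrow> ('s \<Rightarrow> 'a) \<Rightarrow> bool" where
  "sr_det G X Y Ps \<sigma> \<longleftrightarrow> (\<forall>q \<in> Ps. \<sigma> q \<in> SRActs G X Y q)"

definition gen_path :: "('s, 'a) game \<Rightarrow> ('s \<Rightarrow> 'a) \<Rightarrow> ('s \<Rightarrow> 'a) \<Rightarrow> 's \<Rightarrow> (nat \<Rightarrow> 's) \<Rightarrow> bool" where
  "gen_path H \<sigma>1 \<sigma>2 s \<rho> \<longleftrightarrow>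
     \<rho> 0 = s \<and>
     (\<forall>n. Tr H (\<rho> n) (if \<rho> n \<in> S1 H then \<sigma>1 (\<rho> n) else \<sigma>2 (\<rho> n)) = Some (\<rho> (Suc n)))"

definition DSWin1 :: "('s, 'a) game \<Rightarrow> 's set \<Rightarrow> 's set \<Rightarrow> 's set" where
  "DSWin1 G X Y = {s \<in> St G. \<exists>\<sigma>1. sr_det G X Y (S1 G) \<sigma>1 \<and>
      (\<forall>\<sigma>2. sr_det G X Y (S2 G) \<sigma>2 \<longrightarrow>
         (\<forall>\<rho>. gen_path (true_game G X Y) \<sigma>1 \<sigma>2 s \<rho> \<longrightarrow> (\<exists>n. \<rho> n \<in> X \<union> Y)))}"

definition SRActs_as :: "('s, 'a) game \<Rightarrow> 's \<Rightarrow> 'a set" where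
  "SRActs_as G q =
     (if q \<in> S2 G \<inter> Win2 G (Fin G) - Fin G
      then {a. enabled G q a \<and> nxt G q a \<in> Win2 G (Fin G)}
      else {a. enabled G q a})"

text \<open>Memoryless randomized strategy: map from states to distributions over actions.
  Subjectively rationalizable: support contained in SRActs_as (pmf supports are nonempty).\<close>
definition sr_rand :: "('s, 'a) game \<Rightarrow> 's set \<Rightarrow> ('s \<Rightarrow> 'a pmf) \<Rightarrow> bool" where
  "sr_rand G Ps \<pi> \<longleftrightarrow> (\<forall>q \<in> Ps. set_pmf (\<pi> q) \<subseteq> SRActs_as G q)"

definition kernel :: "('s, 'a) game \<Rightarrow> ('s \<Rightarrow> 'a pmf) \<Rightarrow> ('s \<Rightarrow> 'a pmf) \<Rightarrow> 's \<Rightarrow> 's pmf" where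
  "kernel H \<pi>1 \<pi>2 q = map_pmf (nxt H q) (if q \<in> S1 H then \<pi>1 q else \<pi>2 q)"

text \<open>Distribution of the finite path prefix [\<rho>0, ..., \<rho>n] of the induced path measure.\<close>
fun prefix_pmf :: "('s, 'a) game \<Rightarrow> ('s \<Rightarrow> 'a pmf) \<Rightarrow> ('s \<Rightarrow> 'a pmf) \<Rightarrow> nat \<Rightarrow> 's \<Rightarrow> 's list pmf" where
  "prefix_pmf H \<pi>1 \<pi>2 0 q = return_pmf [q]"
| "prefix_pmf H \<pi>1 \<pi>2 (Suc n) q =
     bind_pmf (kernel H \<pi>1 \<pi>2 q) (\<lambda>q'. map_pmf (Cons q) (prefix_pmf H \<pi>1 \<pi>2 n q'))"

text \<open>Probability that the path from s visits Z: by continuity of the path measure,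
  the supremum over n of the probability of visiting Z within the first n steps.\<close>
definition prob_visit :: "('s, 'a) game \<Rightarrow> ('s \<Rightarrow> 'a pmf) \<Rightarrow> ('s \<Rightarrow> 'a pmf) \<Rightarrow> 's \<Rightarrow> 's set \<Rightarrow> real" where
  "prob_visit H \<pi>1 \<pi>2 s Z =
     (SUP n. measure_pmf.prob (prefix_pmf H \<pi>1 \<pi>2 n s) {xs. \<exists>x \<in> set xs. x \<in> Z})"

definition DASWin1 :: "('s, 'a) game \<Rightarrow> 's set \<Rightarrow> 's set \<Rightarrow> 's set" where
  "DASWin1 G X Y = {s \<in> St G. \<exists>\<pi>1. sr_rand G (S1 G) \<pi>1 \<and>
      (\<forall>\<pi>2. sr_rand G (S2 G) \<pi>2 \<longrightarrow>
         prob_visit (true_game G X Y) \<pi>1 \<pi>2 s (X \<union> Y) = 1)}"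

end

theory Submission
  imports Defs
begin

(* Let W be the attractor of X \<union> Y for player 1 in the game where player 2 may only play
   subjectively rationalizable (rank-decreasing) actions.  On W, the attractor strategy of
   player 1 forces a visit to X \<union> Y against every rationalizable player 2, so W lies in
   DSWin1.  Off W, every move of player 1 stays off W, and by finiteness player 2 has a
   rank-decreasing move that stays off W.  Rank-decreasing moves lead into
   Win2 (F \<union> Y) \<subseteq> Win2 F, so they are also rationalizable in the almost-sure sense; against
   this deterministic player-2 strategy every randomized player-1 strategy visits X \<union> Y with
   probability 0.  Hence DASWin1 lies in W. *)

lemma reach_gameD:
  assumes "reach_game G"
  shows "finite (St G)" "S1 G \<union> S2 G = St G" "S1 G \<inter> S2 G = {}"
    and "enabled G q a \<Longrightarrow> nxt G q a \<in> St G"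
    and "q \<in> St G \<Longrightarrow> \<exists>a. enabled G q a"
  using assms by (auto simp: reach_game_def enabled_def nxt_def)

lemma finite_successors:
  assumes "reach_game G" "A \<subseteq> {a. enabled G q a}"
  shows "finite (nxt G q ` A)"
  using assms reach_gameD(1,4)[OF assms(1)] by (blast intro: finite_subset)

lemma finite_subset_UN_mono:
  fixes A :: "nat \<Rightarrow> 'a set"
  assumes "mono A" "finite N" "N \<subseteq> (\<Union>k. A k)"
  obtains K where "N \<subseteq> A K"
proof -
  have "\<forall>x\<in>N. \<exists>k. x \<in> A k" using assms(3) by blast
  from bchoice[OF this] obtain k where k: "\<forall>x\<in>N. x \<in> A (k x)" by blast
  have "N \<subseteq> A (Max (k ` N))"
  proof
    fix x assume "x \<in> N"
    then have "k x \<le> Max (k ` N)" using assms(2) by simp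
    then show "x \<in> A (Max (k ` N))" using k \<open>x \<in> N\<close> monoD[OF assms(1)] by blast
  qed
  then show thesis by (rule that)
qed

lemma mono_level_unique:
  fixes A :: "nat \<Rightarrow> 'a set"
  assumes "mono A" "x \<in> A (Suc k)" "x \<notin> A k" "x \<in> A (Suc j)" "x \<notin> A j"
  shows "k = j"
  using assms monoD[OF assms(1), of "Suc k" j] monoD[OF assms(1), of "Suc j" k]
  by (metis Suc_leI linorder_neqE_nat subsetD)

lemma mono_attr: "mono (attr G R)"
  unfolding mono_iff_le_Suc by auto

lemma Win2_S2I:
  assumes "q \<in> S2 G" "enabled G q a" "nxt G q a \<in> Win2 G R"
  shows "q \<in> Win2 G R"
proof -
  obtain k where "nxt G q a \<in> attr G R k" using assms(3) unfolding Win2_def by blast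
  with assms(1,2) have "q \<in> attr G R (Suc k)" by (auto simp only: attr.simps)
  then show ?thesis unfolding Win2_def by blast
qed

lemma subset_Win2: "R \<subseteq> Win2 G R"
  unfolding Win2_def by (metis UNIV_I UN_upper attr.simps(1))

lemma Win2_S1I:
  assumes "reach_game G" "q \<in> S1 G" "\<And>a. enabled G q a \<Longrightarrow> nxt G q a \<in> Win2 G R"
  shows "q \<in> Win2 G R"
proof -
  have "nxt G q ` {a. enabled G q a} \<subseteq> (\<Union>k. attr G R k)"
    using assms(3) unfolding Win2_def by blast
  then obtain K where "nxt G q ` {a. enabled G q a} \<subseteq> attr G R K"
    using finite_subset_UN_mono[OF mono_attr finite_successors[OF assms(1) order_refl]] by blast
  then have "q \<in> attr G R (Suc K)" using assms(2) by auto
  then show ?thesis unfolding Win2_def by blast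
qed

lemma Win2_transitive:
  assumes "reach_game G" "R \<subseteq> Win2 G F"
  shows "Win2 G R \<subseteq> Win2 G F"
proof -
  have "attr G R k \<subseteq> Win2 G F" for k
  proof (induction k)
    case 0
    show ?case using assms(2) by simp
  next
    case (Suc k)
    show ?case
    proof
      fix q assume "q \<in> attr G R (Suc k)"
      then consider "q \<in> attr G R k"
        | "q \<in> S1 G" "\<forall>a. enabled G q a \<longrightarrow> nxt G q a \<in> attr G R k"
        | a where "q \<in> S2 G" "enabled G q a" "nxt G q a \<in> attr G R k"
        by auto
      then show "q \<in> Win2 G F"
        using Suc.IH by cases (blast intro: Win2_S1I[OF assms(1)] Win2_S2I)+
    qed
  qed
  then show ?thesis unfolding Win2_def[of G R] by blast
qed

lemma Win2_S2_successor:
  assumes "S1 G \<inter> S2 G = {}" "q \<in> S2 G" "q \<in> Win2 G R" "q \<notin> R"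
  shows "\<exists>a. enabled G q a \<and> nxt G q a \<in> Win2 G R"
proof -
  obtain k where "q \<in> attr G R k" using assms(3) unfolding Win2_def by blast
  then show ?thesis
  proof (induction k)
    case 0
    with assms(4) show ?case by simp
  next
    case (Suc k)
    then show ?case using assms(1,2) unfolding Win2_def by auto
  qed
qed

lemma attr_perc_game: "attr (perc_game G X Y) R k = attr G R k"
  by (induction k) (simp_all add: perc_game_def enabled_def nxt_def)

lemma perc_rank_finite_iff: "perc_rank G X Y q < \<infinity> \<longleftrightarrow> q \<in> Win2 G (Fin G \<union> Y)"
  unfolding perc_rank_def rank_def Win2_def attr_perc_game by (simp add: perc_game_def)

lemma SRActs_enabled: "a \<in> SRActs G X Y q \<Longrightarrow> enabled G q a"
  unfolding SRActs_def by (auto split: if_splits)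

lemma SRActs_as_enabled: "a \<in> SRActs_as G q \<Longrightarrow> enabled G q a"
  unfolding SRActs_as_def by (auto split: if_splits)

lemma SRActs_not_S2: "q \<notin> S2 G \<Longrightarrow> SRActs G X Y q = {a. enabled G q a}"
  unfolding SRActs_def by simp

lemma SRActs_as_not_S2: "q \<notin> S2 G \<Longrightarrow> SRActs_as G q = {a. enabled G q a}"
  unfolding SRActs_as_def by simp

lemma SRActs_subset_SRActs_as:
  assumes "reach_game G" "Y \<subseteq> Win2 G (Fin G)" "q \<notin> Y"
  shows "SRActs G X Y q \<subseteq> SRActs_as G q"
proof (cases "q \<in> S2 G \<inter> Win2 G (Fin G) - Fin G")
  case True
  then have "q \<in> S2 G \<inter> Win2 G (Fin G) - (Fin G \<union> Y)" using assms(3) by blast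
  then have SR: "SRActs G X Y q =
      {a. enabled G q a \<and> perc_rank G X Y (nxt G q a) < perc_rank G X Y q}"
    unfolding SRActs_def by (rule if_P)
  have "nxt G q a \<in> Win2 G (Fin G)" if "a \<in> SRActs G X Y q" for a
  proof -
    have "perc_rank G X Y (nxt G q a) < perc_rank G X Y q"
      using that unfolding SR by blast
    then have "perc_rank G X Y (nxt G q a) < \<infinity>"
      using enat_ord_simps(3) by (rule less_le_trans)
    then have "nxt G q a \<in> Win2 G (Fin G \<union> Y)" by (simp only: perc_rank_finite_iff)
    moreover have "Win2 G (Fin G \<union> Y) \<subseteq> Win2 G (Fin G)"
      using assms(2) subset_Win2[of "Fin G" G] by (intro Win2_transitive[OF assms(1)]) blast
    ultimately show ?thesis by blast
  qed
  moreover have "SRActs_as G q = {a. enabled G q a \<and> nxt G q a \<in> Win2 G (Fin G)}"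
    unfolding SRActs_as_def if_P[OF True] ..
  ultimately show ?thesis unfolding SR by blast
next
  case False
  then have "q \<notin> S2 G \<inter> Win2 G (Fin G) - (Fin G \<union> Y)" by blast
  then have "SRActs G X Y q = {a. enabled G q a}" unfolding SRActs_def by (rule if_not_P)
  moreover have "SRActs_as G q = {a. enabled G q a}" unfolding SRActs_as_def using False by (rule if_not_P)
  ultimately show ?thesis by simp
qed

lemma SRActs_as_nonempty:
  assumes "reach_game G" "q \<in> St G"
  shows "SRActs_as G q \<noteq> {}"
proof (cases "q \<in> S2 G \<inter> Win2 G (Fin G) - Fin G")
  case True
  then show ?thesis
    using Win2_S2_successor[OF reach_gameD(3)[OF assms(1)]] by (auto simp: SRActs_as_def)
next
  case False
  then show ?thesis using reach_gameD(5)[OF assms] unfolding SRActs_as_def if_not_P[OF False] by simp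
qed

lemma gen_path_true_game_Suc:
  assumes "gen_path (true_game G X Y) \<sigma>1 \<sigma>2 s \<rho>" "\<rho> n \<notin> X \<union> Y"
  shows "\<rho> (Suc n) = nxt G (\<rho> n) (if \<rho> n \<in> S1 G then \<sigma>1 (\<rho> n) else \<sigma>2 (\<rho> n))"
  using assms(1)[unfolded gen_path_def, THEN conjunct2, rule_format, of n] assms(2)
  by (simp add: true_game_def nxt_def)

lemma kernel_true_game:
  assumes "q \<notin> X \<union> Y"
  shows "kernel (true_game G X Y) \<pi>1 \<pi>2 q = kernel G \<pi>1 \<pi>2 q"
proof -
  have "nxt (true_game G X Y) q = nxt G q"
    using assms by (simp add: fun_eq_iff true_game_def nxt_def)
  then show ?thesis by (simp add: kernel_def true_game_def)
qed

lemma set_pmf_prefix_pmf_trap: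
  assumes "\<And>q. q \<in> C \<Longrightarrow> set_pmf (kernel H \<pi>1 \<pi>2 q) \<subseteq> C" "s \<in> C"
    and "xs \<in> set_pmf (prefix_pmf H \<pi>1 \<pi>2 n s)"
  shows "set xs \<subseteq> C"
  using assms(2,3)
proof (induction n arbitrary: s xs)
  case 0
  then show ?case by simp
next
  case (Suc n)
  from Suc.prems(2) obtain q xs' where q: "q \<in> set_pmf (kernel H \<pi>1 \<pi>2 s)"
    and xs': "xs' \<in> set_pmf (prefix_pmf H \<pi>1 \<pi>2 n q)" and xs: "xs = s # xs'"
    by auto
  have "q \<in> C" using assms(1)[OF Suc.prems(1)] q by blast
  then have "set xs' \<subseteq> C" using xs' by (rule Suc.IH)
  then show ?case using Suc.prems(1) xs by simp
qed

lemma prob_visit_trap: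
  assumes "\<And>q. q \<in> C \<Longrightarrow> set_pmf (kernel H \<pi>1 \<pi>2 q) \<subseteq> C" "s \<in> C" "C \<inter> Z = {}"
  shows "prob_visit H \<pi>1 \<pi>2 s Z = 0"
proof -
  have "measure_pmf.prob (prefix_pmf H \<pi>1 \<pi>2 n s) {xs. \<exists>x\<in>set xs. x \<in> Z} = 0" for n
    unfolding measure_pmf_zero_iff
    using set_pmf_prefix_pmf_trap[of C H \<pi>1 \<pi>2 s, OF assms(1,2)] assms(3) by blast
  then show ?thesis unfolding prob_visit_def by simp
qed

fun p1_attr :: "('s, 'a) game \<Rightarrow> 's set \<Rightarrow> 's set \<Rightarrow> nat \<Rightarrow> 's set" where
  "p1_attr G X Y 0 = X \<union> Y"
| "p1_attr G X Y (Suc k) = p1_attr G X Y k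
     \<union> {q \<in> S1 G. \<exists>a. enabled G q a \<and> nxt G q a \<in> p1_attr G X Y k}
     \<union> {q \<in> S2 G. \<forall>a \<in> SRActs G X Y q. nxt G q a \<in> p1_attr G X Y k}"

definition p1_win :: "('s, 'a) game \<Rightarrow> 's set \<Rightarrow> 's set \<Rightarrow> 's set" where
  "p1_win G X Y = (\<Union>k. p1_attr G X Y k)"

lemma mono_p1_attr: "mono (p1_attr G X Y)"
  unfolding mono_iff_le_Suc by auto

lemma targets_subset_p1_win: "X \<union> Y \<subseteq> p1_win G X Y"
  unfolding p1_win_def by (metis UNIV_I UN_upper p1_attr.simps(1))

lemma p1_attr_strategy:
  assumes "reach_game G"
  obtains \<sigma>1 where "sr_det G X Y (S1 G) \<sigma>1"
    and "\<And>q k. q \<in> S1 G \<Longrightarrow> q \<in> p1_attr G X Y (Suc k) \<Longrightarrow> q \<notin> p1_attr G X Y k \<Longrightarrow>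
           nxt G q (\<sigma>1 q) \<in> p1_attr G X Y k"
proof -
  let ?A = "p1_attr G X Y"
  have "\<exists>a. enabled G q a \<and> (\<forall>k. q \<in> ?A (Suc k) \<and> q \<notin> ?A k \<longrightarrow> nxt G q a \<in> ?A k)"
    if q: "q \<in> S1 G" for q
  proof (cases "\<exists>k. q \<in> ?A (Suc k) \<and> q \<notin> ?A k")
    case True
    then obtain k where k: "q \<in> ?A (Suc k)" "q \<notin> ?A k" by blast
    moreover have "q \<notin> S2 G" using q reach_gameD(3)[OF assms] by blast
    ultimately obtain a where "enabled G q a" "nxt G q a \<in> ?A k" using q by auto
    moreover have "j = k" if "q \<in> ?A (Suc j)" "q \<notin> ?A j" for j
      using mono_level_unique[OF mono_p1_attr that k] .
    ultimately show ?thesis by blast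
  next
    case False
    moreover obtain a where "enabled G q a" using q reach_gameD(2,5)[OF assms] by blast
    ultimately show ?thesis by blast
  qed
  then have "\<forall>q\<in>S1 G. \<exists>a. enabled G q a \<and> (\<forall>k. q \<in> ?A (Suc k) \<and> q \<notin> ?A k \<longrightarrow> nxt G q a \<in> ?A k)"
    by blast
  from bchoice[OF this] obtain \<sigma>1 where \<sigma>1: "\<forall>q\<in>S1 G. enabled G q (\<sigma>1 q) \<and>
      (\<forall>k. q \<in> ?A (Suc k) \<and> q \<notin> ?A k \<longrightarrow> nxt G q (\<sigma>1 q) \<in> ?A k)"
    by blast
  have sr: "sr_det G X Y (S1 G) \<sigma>1"
    unfolding sr_det_def using \<sigma>1 reach_gameD(3)[OF assms] SRActs_not_S2 by fastforce
  show thesis using \<sigma>1 by (intro that[OF sr]) blast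
qed

lemma p1_attr_reaches_targets:
  assumes \<sigma>1: "\<And>q k. q \<in> S1 G \<Longrightarrow> q \<in> p1_attr G X Y (Suc k) \<Longrightarrow> q \<notin> p1_attr G X Y k \<Longrightarrow>
           nxt G q (\<sigma>1 q) \<in> p1_attr G X Y k"
    and \<sigma>2: "sr_det G X Y (S2 G) \<sigma>2"
    and \<rho>: "gen_path (true_game G X Y) \<sigma>1 \<sigma>2 s \<rho>"
  shows "\<rho> n \<in> p1_attr G X Y k \<Longrightarrow> \<exists>m. \<rho> m \<in> X \<union> Y"
proof (induction k arbitrary: n)
  case 0
  then show ?case by auto
next
  case (Suc k)
  show ?case
  proof (cases "\<rho> n \<in> p1_attr G X Y k")
    case True
    then show ?thesis by (rule Suc.IH)
  next
    case False
    have "X \<union> Y \<subseteq> p1_attr G X Y k" using monoD[OF mono_p1_attr, of 0 k] by simp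
    then have step: "\<rho> (Suc n) = nxt G (\<rho> n) (if \<rho> n \<in> S1 G then \<sigma>1 (\<rho> n) else \<sigma>2 (\<rho> n))"
      using gen_path_true_game_Suc[OF \<rho>] False by blast
    have "\<rho> (Suc n) \<in> p1_attr G X Y k"
    proof (cases "\<rho> n \<in> S1 G")
      case True
      then show ?thesis using step \<sigma>1[OF True Suc.prems False] by simp
    next
      case notS1: False
      then have "\<rho> n \<in> S2 G" "\<forall>a\<in>SRActs G X Y (\<rho> n). nxt G (\<rho> n) a \<in> p1_attr G X Y k"
        using Suc.prems False by auto
      then show ?thesis using step notS1 \<sigma>2 unfolding sr_det_def by simp
    qed
    then show ?thesis by (rule Suc.IH)
  qed
qed

lemma p1_win_subset_DSWin1:
  assumes "reach_game G"
  shows "St G \<inter> p1_win G X Y \<subseteq> DSWin1 G X Y"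
proof
  fix s assume s: "s \<in> St G \<inter> p1_win G X Y"
  obtain \<sigma>1 where sr: "sr_det G X Y (S1 G) \<sigma>1"
    and \<sigma>1: "\<And>q k. q \<in> S1 G \<Longrightarrow> q \<in> p1_attr G X Y (Suc k) \<Longrightarrow> q \<notin> p1_attr G X Y k \<Longrightarrow>
               nxt G q (\<sigma>1 q) \<in> p1_attr G X Y k"
    using p1_attr_strategy[OF assms] by blast
  obtain k where k: "s \<in> p1_attr G X Y k" using s unfolding p1_win_def by blast
  have "\<exists>m. \<rho> m \<in> X \<union> Y"
    if "sr_det G X Y (S2 G) \<sigma>2" "gen_path (true_game G X Y) \<sigma>1 \<sigma>2 s \<rho>" for \<sigma>2 \<rho>
  proof (rule p1_attr_reaches_targets[OF \<sigma>1 that])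
    show "\<rho> 0 \<in> p1_attr G X Y k" using k that(2) by (simp add: gen_path_def)
  qed
  then show "s \<in> DSWin1 G X Y" using s sr unfolding DSWin1_def by blast
qed

lemma S1_outside_p1_win:
  assumes "q \<in> S1 G" "q \<notin> p1_win G X Y" "enabled G q a"
  shows "nxt G q a \<notin> p1_win G X Y"
proof
  assume "nxt G q a \<in> p1_win G X Y"
  then obtain k where "nxt G q a \<in> p1_attr G X Y k" unfolding p1_win_def by blast
  then have "q \<in> p1_attr G X Y (Suc k)" unfolding p1_attr.simps using assms(1,3) by blast
  then show False using assms(2) unfolding p1_win_def by blast
qed

lemma S2_outside_p1_win:
  assumes "reach_game G" "q \<in> S2 G" "q \<notin> p1_win G X Y"
  shows "\<exists>a\<in>SRActs G X Y q. nxt G q a \<notin> p1_win G X Y"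
proof (rule ccontr)
  assume "\<not> ?thesis"
  then have "nxt G q ` SRActs G X Y q \<subseteq> (\<Union>k. p1_attr G X Y k)"
    unfolding p1_win_def by blast
  moreover have "finite (nxt G q ` SRActs G X Y q)"
    by (rule finite_successors[OF assms(1)]) (blast intro: SRActs_enabled)
  ultimately obtain K where "nxt G q ` SRActs G X Y q \<subseteq> p1_attr G X Y K"
    using finite_subset_UN_mono[OF mono_p1_attr] by blast
  then have "q \<in> p1_attr G X Y (Suc K)"
    unfolding p1_attr.simps image_subset_iff using assms(2) by blast
  then show False using assms(3) unfolding p1_win_def by blast
qed

lemma p2_spoiling_strategy:
  assumes "reach_game G" "Y \<subseteq> Win2 G (Fin G)"
  obtains \<sigma>2 where "\<And>q. q \<in> S2 G \<Longrightarrow> \<sigma>2 q \<in> SRActs_as G q"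
    and "\<And>q. q \<in> S2 G \<Longrightarrow> q \<notin> p1_win G X Y \<Longrightarrow> nxt G q (\<sigma>2 q) \<notin> p1_win G X Y"
proof -
  have "\<exists>a. a \<in> SRActs_as G q \<and> (q \<notin> p1_win G X Y \<longrightarrow> nxt G q a \<notin> p1_win G X Y)"
    if q: "q \<in> S2 G" for q
  proof (cases "q \<in> p1_win G X Y")
    case True
    have "q \<in> St G" using q reach_gameD(2)[OF assms(1)] by blast
    then obtain a where "a \<in> SRActs_as G q" using SRActs_as_nonempty[OF assms(1)] by blast
    with True show ?thesis by blast
  next
    case False
    then have "q \<notin> Y" using targets_subset_p1_win[of X Y G] by blast
    obtain a where "a \<in> SRActs G X Y q" "nxt G q a \<notin> p1_win G X Y"
      using S2_outside_p1_win[OF assms(1) q False] by blast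
    with SRActs_subset_SRActs_as[OF assms \<open>q \<notin> Y\<close>] show ?thesis by blast
  qed
  then have "\<forall>q\<in>S2 G. \<exists>a. a \<in> SRActs_as G q \<and> (q \<notin> p1_win G X Y \<longrightarrow> nxt G q a \<notin> p1_win G X Y)"
    by blast
  from bchoice[OF this] obtain \<sigma>2 where
    "\<forall>q\<in>S2 G. \<sigma>2 q \<in> SRActs_as G q \<and> (q \<notin> p1_win G X Y \<longrightarrow> nxt G q (\<sigma>2 q) \<notin> p1_win G X Y)"
    by blast
  then show thesis by (intro that) blast+
qed

lemma kernel_outside_p1_win:
  assumes "reach_game G" and \<pi>1: "sr_rand G (S1 G) \<pi>1"
    and \<sigma>2_sr: "\<And>q. q \<in> S2 G \<Longrightarrow> \<sigma>2 q \<in> SRActs_as G q"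
    and \<sigma>2_out: "\<And>q. q \<in> S2 G \<Longrightarrow> q \<notin> p1_win G X Y \<Longrightarrow> nxt G q (\<sigma>2 q) \<notin> p1_win G X Y"
    and q: "q \<in> St G - p1_win G X Y"
  shows "set_pmf (kernel (true_game G X Y) \<pi>1 (\<lambda>q. return_pmf (\<sigma>2 q)) q) \<subseteq> St G - p1_win G X Y"
proof -
  have "q \<notin> X \<union> Y" using q targets_subset_p1_win[of X Y G] by blast
  then have kernel: "kernel (true_game G X Y) \<pi>1 (\<lambda>q. return_pmf (\<sigma>2 q)) q
      = kernel G \<pi>1 (\<lambda>q. return_pmf (\<sigma>2 q)) q"
    by (rule kernel_true_game)
  show ?thesis
  proof (cases "q \<in> S1 G")
    case True
    then have "q \<notin> S2 G" using reach_gameD(3)[OF assms(1)] by blast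
    have "set_pmf (\<pi>1 q) \<subseteq> SRActs_as G q" using \<pi>1 True unfolding sr_rand_def by blast
    then have "set_pmf (\<pi>1 q) \<subseteq> {a. enabled G q a}"
      unfolding SRActs_as_not_S2[OF \<open>q \<notin> S2 G\<close>] .
    moreover have "nxt G q a \<in> St G - p1_win G X Y" if "enabled G q a" for a
      using S1_outside_p1_win[OF True _ that] reach_gameD(4)[OF assms(1) that] q by blast
    ultimately show ?thesis using True unfolding kernel unfolding kernel_def by auto
  next
    case False
    then have "q \<in> S2 G" using q reach_gameD(2)[OF assms(1)] by blast
    then have "enabled G q (\<sigma>2 q)" "nxt G q (\<sigma>2 q) \<notin> p1_win G X Y"
      using SRActs_as_enabled[OF \<sigma>2_sr] \<sigma>2_out q by blast+
    then show ?thesis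
      using False reach_gameD(4)[OF assms(1)] unfolding kernel unfolding kernel_def by simp
  qed
qed

lemma prob_visit_outside_p1_win:
  assumes "reach_game G" "Y \<subseteq> Win2 G (Fin G)" "s \<in> St G" "s \<notin> p1_win G X Y"
  obtains \<pi>2 where "sr_rand G (S2 G) \<pi>2"
    and "\<And>\<pi>1. sr_rand G (S1 G) \<pi>1 \<Longrightarrow> prob_visit (true_game G X Y) \<pi>1 \<pi>2 s (X \<union> Y) = 0"
proof -
  obtain \<sigma>2 where \<sigma>2_sr: "\<And>q. q \<in> S2 G \<Longrightarrow> \<sigma>2 q \<in> SRActs_as G q"
    and \<sigma>2_out: "\<And>q. q \<in> S2 G \<Longrightarrow> q \<notin> p1_win G X Y \<Longrightarrow> nxt G q (\<sigma>2 q) \<notin> p1_win G X Y"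
    using p2_spoiling_strategy[OF assms(1,2)] by blast
  have sr: "sr_rand G (S2 G) (\<lambda>q. return_pmf (\<sigma>2 q))"
    using \<sigma>2_sr by (simp add: sr_rand_def)
  have "prob_visit (true_game G X Y) \<pi>1 (\<lambda>q. return_pmf (\<sigma>2 q)) s (X \<union> Y) = 0"
    if "sr_rand G (S1 G) \<pi>1" for \<pi>1
  proof (rule prob_visit_trap)
    show "set_pmf (kernel (true_game G X Y) \<pi>1 (\<lambda>q. return_pmf (\<sigma>2 q)) q) \<subseteq> St G - p1_win G X Y"
      if "q \<in> St G - p1_win G X Y" for q
      using kernel_outside_p1_win[OF assms(1) \<open>sr_rand G (S1 G) \<pi>1\<close> \<sigma>2_sr \<sigma>2_out that] .
    show "s \<in> St G - p1_win G X Y" using assms(3,4) by blast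
    show "(St G - p1_win G X Y) \<inter> (X \<union> Y) = {}" using targets_subset_p1_win[of X Y G] by blast
  qed
  then show thesis by (rule that[OF sr])
qed

lemma DASWin1_subset_p1_win:
  assumes "reach_game G" "Y \<subseteq> Win2 G (Fin G)"
  shows "DASWin1 G X Y \<subseteq> p1_win G X Y"
proof
  fix s assume "s \<in> DASWin1 G X Y"
  then obtain \<pi>1 where s: "s \<in> St G" and \<pi>1: "sr_rand G (S1 G) \<pi>1"
    and win: "\<And>\<pi>2. sr_rand G (S2 G) \<pi>2 \<Longrightarrow> prob_visit (true_game G X Y) \<pi>1 \<pi>2 s (X \<union> Y) = 1"
    unfolding DASWin1_def by blast
  show "s \<in> p1_win G X Y"
  proof (rule ccontr)
    assume "s \<notin> p1_win G X Y"
    then obtain \<pi>2 where "sr_rand G (S2 G) \<pi>2"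
      and "prob_visit (true_game G X Y) \<pi>1 \<pi>2 s (X \<union> Y) = 0"
      using prob_visit_outside_p1_win[OF assms s] \<pi>1 by metis
    then show False using win by simp
  qed
qed

theorem theorem7:
  fixes G :: "('s, 'a) game" and X Y :: "'s set"
  assumes "reach_game G"
    and "X \<subseteq> Win2 G (Fin G) - Fin G"
    and "Y \<subseteq> Win2 G (Fin G) - Fin G"
    and "X \<inter> Y = {}"
  shows "DASWin1 G X Y \<subseteq> DSWin1 G X Y"
proof -
  \<comment> \<open>Only \<open>Y \<subseteq> Win2 G (Fin G)\<close> is needed.\<close>
  have "DASWin1 G X Y \<subseteq> St G" unfolding DASWin1_def by blast
  moreover have "DASWin1 G X Y \<subseteq> p1_win G X Y"
    using assms(3) by (intro DASWin1_subset_p1_win[OF assms(1)]) blast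
  ultimately have "DASWin1 G X Y \<subseteq> St G \<inter> p1_win G X Y" by blast
  then show ?thesis using p1_win_subset_DSWin1[OF assms(1)] by blast
qed

end
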